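(* Let $D$ be a strongly connected tournament, let $\sigma=v_1,\dots,v_n$ be an ordering of $V(D)$, and suppose the feedback arc set $S$ with respect to $\sigma$ is a minimum feedback arc set of $D$ and the subdigraph $D_S$ arc-induced by $S$ is a directed star. Let $m$ be the number of (distinct) feedback intervals of $\sigma$ with respect to $S$, and let $k\ge 2$. Then $D$ is $k$-AW if and only if $\gcd(k,m)=1$.
   Context: A tournament is a digraph in which for every pair of distinct vertices $v,w$ exactly one of $vw$, $wv$ is an arc. Strongly connected: for any two vertices there are directed walks in both directions. For an ordering $\sigma=v_1,\dots,v_n$ of $V(D)$, the feedback arc set with respect to $\sigma$ is the set $S$ of arcs $v_jv_i\in A(D)$ with $i<j$; a minimum feedback arc set is a feedback arc set (with respect to some ordering) of minimum cardinality over all orderings. If $vw\in S$, $v$ is a tail feedback vertex and $w$ a head feedback vertex. For $B\subseteq A(D)$, the arc-induced subdigraph $D_B$ has arc set $B$ and vertex set the vertices incident with arcs of $B$. For $s,t\ge 0$, an $(s,t)$-directed star is a digraph with vertex set $\{v,u_1,\dots,u_s,w_1,\dots,w_t\}$ and arc set $\{u_iv, vw_j:1\le i\le s,1\le j\le t\}$; $v$ is its central vertex. A head feedback interval (resp. tail feedback interval) is a nonempty set of consecutive vertices $\{v_i,v_{i+1},\dots,v_j\}$ in $\sigma$ all of which are head (resp. tail) feedback vertices, such that neither $v_{i-1}$ nor $v_{j+1}$ (when they exist) is a head (resp. tail) feedback vertex. A feedback interval is a set that is a head feedback interval or a tail feedback interval (or both; a set that is both is counted once in $m$). The $k$-lights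 out game: start with a labeling $V(D)\to\mathbb{Z}_k$; toggling $v$ increases by $1$ mod $k$ the label of $v$ and of every $w$ with $vw\in A(D)$; the game is won when all labels are $0$. $D$ is $k$-AW if every labeling $V(D)\to\mathbb{Z}_k$ can be brought to the all-zero labeling by toggling. *)

theory Defs
  imports Main
begin

definition tournament :: "'a set \<Rightarrow> ('a \<times> 'a) set \<Rightarrow> bool" where
  "tournament V A \<longleftrightarrow> finite V \<and> A \<subseteq> V \<times> V \<and> (\<forall>v. (v, v) \<notin> A) \<and>
     (\<forall>v\<in>V. \<forall>w\<in>V. v \<noteq> w \<longrightarrow> ((v, w) \<in> A \<longleftrightarrow> (w, v) \<notin> A))"

definition strongly_connected :: "'a set \<Rightarrow> ('a \<times> 'a) set \<Rightarrow> bool" where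
  "strongly_connected V A \<longleftrightarrow> (\<forall>v\<in>V. \<forall>w\<in>V. (v, w) \<in> A\<^sup>* \<and> (w, v) \<in> A\<^sup>*)"

definition is_ordering :: "'a set \<Rightarrow> 'a list \<Rightarrow> bool" where
  "is_ordering V \<sigma> \<longleftrightarrow> distinct \<sigma> \<and> set \<sigma> = V"

definition fas :: "('a \<times> 'a) set \<Rightarrow> 'a list \<Rightarrow> ('a \<times> 'a) set" where
  "fas A \<sigma> = {(x, y) \<in> A. \<exists>i j. i < j \<and> j < length \<sigma> \<and> \<sigma> ! i = y \<and> \<sigma> ! j = x}"

definition min_fas :: "'a set \<Rightarrow> ('a \<times> 'a) set \<Rightarrow> 'a list \<Rightarrow> bool" where
  "min_fas V A \<sigma> \<longleftrightarrow> is_ordering V \<sigma> \<and>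
     (\<forall>\<tau>. is_ordering V \<tau> \<longrightarrow> card (fas A \<sigma>) \<le> card (fas A \<tau>))"

definition arc_verts :: "('a \<times> 'a) set \<Rightarrow> 'a set" where
  "arc_verts B = fst ` B \<union> snd ` B"

definition is_directed_star :: "('a \<times> 'a) set \<Rightarrow> bool" where
  "is_directed_star B \<longleftrightarrow> (\<exists>v U W. finite U \<and> finite W \<and> U \<inter> W = {} \<and> v \<notin> U \<and> v \<notin> W \<and>
      B = {(u, v) | u. u \<in> U} \<union> {(v, w) | w. w \<in> W} \<and>
      arc_verts B = insert v (U \<union> W))"

definition head_fv :: "('a \<times> 'a) set \<Rightarrow> 'a \<Rightarrow> bool" where
  "head_fv S w \<longleftrightarrow> (\<exists>v. (v, w) \<in> S)"

definition tail_fv :: "('a \<times> 'a) set \<Rightarrow> 'a \<Rightarrow> bool" where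
  "tail_fv S v \<longleftrightarrow> (\<exists>w. (v, w) \<in> S)"

definition intervals :: "('a \<Rightarrow> bool) \<Rightarrow> 'a list \<Rightarrow> 'a set set" where
  "intervals P \<sigma> = {(\<lambda>l. \<sigma> ! l) ` {i..j} | i j. i \<le> j \<and> j < length \<sigma> \<and>
      (\<forall>l\<in>{i..j}. P (\<sigma> ! l)) \<and>
      (i = 0 \<or> \<not> P (\<sigma> ! (i - 1))) \<and>
      (j + 1 = length \<sigma> \<or> \<not> P (\<sigma> ! (j + 1)))}"

definition feedback_intervals :: "('a \<times> 'a) set \<Rightarrow> 'a list \<Rightarrow> 'a set set" where
  "feedback_intervals S \<sigma> = intervals (head_fv S) \<sigma> \<union> intervals (tail_fv S) \<sigma>"

text \<open>Lights out: labels are naturals in {0..<k} representing Z_k.\<close>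
definition toggle :: "nat \<Rightarrow> ('a \<times> 'a) set \<Rightarrow> ('a \<Rightarrow> nat) \<Rightarrow> 'a \<Rightarrow> ('a \<Rightarrow> nat)" where
  "toggle k A f v = (\<lambda>u. if u = v \<or> (v, u) \<in> A then (f u + 1) mod k else f u)"

definition toggle_seq :: "nat \<Rightarrow> ('a \<times> 'a) set \<Rightarrow> 'a list \<Rightarrow> ('a \<Rightarrow> nat) \<Rightarrow> ('a \<Rightarrow> nat)" where
  "toggle_seq k A ts f = fold (\<lambda>v g. toggle k A g v) ts f"

definition k_AW :: "nat \<Rightarrow> 'a set \<Rightarrow> ('a \<times> 'a) set \<Rightarrow> bool" where
  "k_AW k V A \<longleftrightarrow> (\<forall>f. (\<forall>v\<in>V. f v < k) \<longrightarrow>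
     (\<exists>ts. set ts \<subseteq> V \<and> (\<forall>v\<in>V. toggle_seq k A ts f v = 0)))"

end

theory Submission
  imports Defs "HOL-Number_Theory.Cong" "HOL-Library.FuncSet"
begin

(* Lights out is linear: if position i of the ordering is toggled X i times, the label of
   the j-th vertex grows by the sum of X over its closed in-neighbourhood.  So D is k-AW iff
   this integer map is onto (Z/k)^n, i.e. (an endomorphism of a finite set) iff its kernel
   modulo k is trivial.  The only backward arcs of the ordering join the centre v_p of the
   star to U (placed after v_p) and to W (placed before v_p).  Hence the equations at all
   v_j with j <> p force the prefix sums of a kernel element X to be X_p times the profile
   that is 1 on U and at p, -1 on W and 0 elsewhere, and the equation at v_p becomes
   m * X_p = 0 with m = 1 + #(maximal runs in U) + #(maximal runs in W).  Minimality of the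
   feedback arc set forbids a feedback arc between consecutive vertices, so v_p forms a run
   of its own and m is exactly the number of feedback intervals. *)

section \<open>Lights out as a linear system\<close>

text \<open>\<open>X i\<close> counts how often \<open>\<sigma>!i\<close> is toggled; \<open>nbhd_sum A \<sigma> X j\<close> is the
  resulting increase of the label of \<open>\<sigma>!j\<close>.\<close>

definition nbhd_sum :: "('a \<times> 'a) set \<Rightarrow> 'a list \<Rightarrow> (nat \<Rightarrow> int) \<Rightarrow> nat \<Rightarrow> int" where
  "nbhd_sum A \<sigma> X j = (\<Sum>i<length \<sigma>. of_bool (\<sigma>!i = \<sigma>!j \<or> (\<sigma>!i, \<sigma>!j) \<in> A) * X i)"

lemma nbhd_sum_cong:
  "(\<And>i. i < length \<sigma> \<Longrightarrow> [X i = Y i] (mod k)) \<Longrightarrow> [nbhd_sum A \<sigma> X j = nbhd_sum A \<sigma> Y j] (mod k)"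
  unfolding nbhd_sum_def by (intro cong_sum cong_mult cong_refl) auto

lemma nbhd_sum_diff: "nbhd_sum A \<sigma> (\<lambda>i. X i - Y i) j = nbhd_sum A \<sigma> X j - nbhd_sum A \<sigma> Y j"
  by (simp add: nbhd_sum_def right_diff_distrib sum_subtractf)

lemma nbhd_sum_scale: "nbhd_sum A \<sigma> (\<lambda>i. c * X i) j = c * nbhd_sum A \<sigma> X j"
  by (simp add: nbhd_sum_def sum_distrib_left mult.left_commute)

lemma toggle_seq_Cons: "toggle_seq k A (v # ts) f = toggle_seq k A ts (toggle k A f v)"
  by (simp add: toggle_seq_def)

lemma toggle_seq_less: "0 < k \<Longrightarrow> f u < k \<Longrightarrow> toggle_seq k A ts f u < k"
  by (induction ts arbitrary: f) (auto simp: toggle_seq_def toggle_seq_Cons toggle_def)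

lemma toggle_seq_mod:
  "toggle_seq k A ts f u mod k = (f u + length (filter (\<lambda>v. v = u \<or> (v, u) \<in> A) ts)) mod k"
proof (induction ts arbitrary: f)
  case Nil
  then show ?case by (simp add: toggle_seq_def)
next
  case (Cons v ts)
  show ?case unfolding toggle_seq_Cons Cons.IH
    by (auto simp: toggle_def mod_add_left_eq)
qed

lemma length_filter_eq_sum_count:
  assumes "distinct \<sigma>" and "set ts \<subseteq> set \<sigma>"
  shows "length (filter P ts) = (\<Sum>i<length \<sigma>. of_bool (P (\<sigma>!i)) * count_list ts (\<sigma>!i))"
proof -
  have count_filter: "count_list (filter P ts) v = of_bool (P v) * count_list ts v" for v
    by (induction ts) auto
  have "length (filter P ts) = sum (count_list (filter P ts)) (set \<sigma>)"
    using assms(2) by (intro sum_count_set[symmetric]) auto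
  also have "\<dots> = (\<Sum>i<length \<sigma>. count_list (filter P ts) (\<sigma>!i))"
    using assms(1) by (simp add: sum.distinct_set_conv_list sum_list_sum_nth atLeast0LessThan)
  finally show ?thesis by (simp add: count_filter)
qed

lemma length_filter_concat_replicate:
  "length (filter P (concat (map (\<lambda>i. replicate (c i) (\<sigma>!i)) [0..<n]))) =
    (\<Sum>i<n. of_bool (P (\<sigma>!i)) * c i)"
  by (induction n) (auto simp: filter_replicate)

lemma toggle_seq_eq_0_iff:
  assumes "0 < k" and "f u < k"
  shows "toggle_seq k A ts f u = 0 \<longleftrightarrow>
    [int (f u) + int (length (filter (\<lambda>v. v = u \<or> (v, u) \<in> A) ts)) = 0] (mod int k)"
proof -
  have "toggle_seq k A ts f u = 0 \<longleftrightarrow> toggle_seq k A ts f u mod k = 0"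
    using toggle_seq_less[of k f u A ts] assms by simp
  also have "\<dots> \<longleftrightarrow> [int (f u) + int (length (filter (\<lambda>v. v = u \<or> (v, u) \<in> A) ts)) = 0] (mod int k)"
    unfolding toggle_seq_mod by (simp add: cong_def flip: of_nat_add of_nat_mod)
  finally show ?thesis .
qed

lemma nbhd_sum_count_list:
  assumes "distinct \<sigma>" and "set ts \<subseteq> set \<sigma>"
  shows "int (length (filter (\<lambda>v. v = \<sigma>!j \<or> (v, \<sigma>!j) \<in> A) ts)) =
    nbhd_sum A \<sigma> (\<lambda>i. int (count_list ts (\<sigma>!i))) j"
  by (simp add: length_filter_eq_sum_count[OF assms] nbhd_sum_def del: of_bool_or_iff)

lemma nbhd_sum_replicate:
  "int (length (filter (\<lambda>v. v = \<sigma>!j \<or> (v, \<sigma>!j) \<in> A)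
      (concat (map (\<lambda>i. replicate (c i) (\<sigma>!i)) [0..<length \<sigma>])))) =
    nbhd_sum A \<sigma> (\<lambda>i. int (c i)) j"
  by (simp add: length_filter_concat_replicate nbhd_sum_def del: of_bool_or_iff)

lemma k_AW_imp_nbhd_sum_surj:
  assumes "k_AW k V A" and "distinct \<sigma>" and "set \<sigma> = V" and "0 < k"
  shows "\<exists>X. \<forall>j<length \<sigma>. [nbhd_sum A \<sigma> X j = g j] (mod int k)"
proof -
  define pos where "pos = the_inv_into {..<length \<sigma>} ((!) \<sigma>)"
  have pos: "pos (\<sigma>!j) = j" if "j < length \<sigma>" for j
    using assms(2) that by (simp add: pos_def the_inv_into_f_f inj_on_nth)
  define f where "f v = nat (- g (pos v) mod int k)" for v
  have "\<forall>v\<in>V. f v < k"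
    using assms(4) by (simp add: f_def nat_less_iff)
  then obtain ts where ts: "set ts \<subseteq> V" "\<forall>v\<in>V. toggle_seq k A ts f v = 0"
    using assms(1) unfolding k_AW_def by (elim allE[of _ f]) blast
  define X where "X i = int (count_list ts (\<sigma>!i))" for i
  have "[nbhd_sum A \<sigma> X j = g j] (mod int k)" if j: "j < length \<sigma>" for j
  proof -
    have "\<sigma>!j \<in> V"
      using j assms(3) by auto
    then have "[int (f (\<sigma>!j)) +
        int (length (filter (\<lambda>v. v = \<sigma>!j \<or> (v, \<sigma>!j) \<in> A) ts)) = 0] (mod int k)"
      using ts(2) toggle_seq_eq_0_iff[OF assms(4), of f "\<sigma>!j" A ts] \<open>\<forall>v\<in>V. f v < k\<close> by simp
    then have lights_out: "[int (f (\<sigma>!j)) + nbhd_sum A \<sigma> X j = 0] (mod int k)"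
      using nbhd_sum_count_list[OF assms(2), of ts j A] ts(1) assms(3) unfolding X_def by simp
    have "[int (f (\<sigma>!j)) + g j = 0] (mod int k)"
      using assms(4) j by (simp add: f_def pos cong_def mod_add_left_eq)
    then have "[int (f (\<sigma>!j)) + nbhd_sum A \<sigma> X j = int (f (\<sigma>!j)) + g j] (mod int k)"
      using lights_out by (metis cong_sym cong_trans)
    then show ?thesis
      by (simp add: cong_add_lcancel)
  qed
  then show ?thesis by blast
qed

lemma nbhd_sum_surj_imp_lights_out:
  assumes "\<forall>g. \<exists>X. \<forall>j<length \<sigma>. [nbhd_sum A \<sigma> X j = g j] (mod int k)"
    and f: "\<forall>v\<in>V. f v < k" and "set \<sigma> = V" and "0 < k"
  shows "\<exists>ts. set ts \<subseteq> V \<and> (\<forall>v\<in>V. toggle_seq k A ts f v = 0)"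
proof -
  obtain X where X: "\<forall>j<length \<sigma>. [nbhd_sum A \<sigma> X j = - int (f (\<sigma>!j))] (mod int k)"
    using assms(1)[THEN spec, of "\<lambda>j. - int (f (\<sigma>!j))"] by blast
  define c where "c i = nat (X i mod int k)" for i
  define ts where "ts = concat (map (\<lambda>i. replicate (c i) (\<sigma>!i)) [0..<length \<sigma>])"
  have "set ts \<subseteq> V"
    using assms(3) by (auto simp: ts_def)
  moreover have "toggle_seq k A ts f v = 0" if v: "v \<in> V" for v
  proof -
    obtain j where j: "j < length \<sigma>" "v = \<sigma>!j"
      using v assms(3) by (auto simp: in_set_conv_nth)
    have "[nbhd_sum A \<sigma> (\<lambda>i. int (c i)) j = nbhd_sum A \<sigma> X j] (mod int k)"
      using assms(4) by (intro nbhd_sum_cong) (simp add: c_def cong_def)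
    then have "[nbhd_sum A \<sigma> (\<lambda>i. int (c i)) j = - int (f v)] (mod int k)"
      using X j cong_trans by blast
    then have "[int (f v) + nbhd_sum A \<sigma> (\<lambda>i. int (c i)) j = int (f v) + - int (f v)] (mod int k)"
      by (intro cong_add cong_refl)
    moreover have "int (length (filter (\<lambda>w. w = v \<or> (w, v) \<in> A) ts)) =
        nbhd_sum A \<sigma> (\<lambda>i. int (c i)) j"
      unfolding ts_def j(2) by (rule nbhd_sum_replicate)
    ultimately show ?thesis
      using toggle_seq_eq_0_iff[OF assms(4), of f v A ts] f v by simp
  qed
  ultimately show ?thesis by blast
qed

lemma k_AW_iff_nbhd_sum_surj:
  assumes "distinct \<sigma>" and "set \<sigma> = V" and "0 < k"
  shows "k_AW k V A \<longleftrightarrow> (\<forall>g. \<exists>X. \<forall>j<length \<sigma>. [nbhd_sum A \<sigma> X j = g j] (mod int k))"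
  using k_AW_imp_nbhd_sum_surj[OF _ assms] nbhd_sum_surj_imp_lights_out[OF _ _ assms(2,3)]
  unfolding k_AW_def by blast

section \<open>Onto versus injective modulo \<open>k\<close>\<close>

definition residue_vecs :: "int \<Rightarrow> nat \<Rightarrow> (nat \<Rightarrow> int) set" where
  "residue_vecs k n = {..<n} \<rightarrow>\<^sub>E {0..<k}"

definition reduce_vec :: "int \<Rightarrow> nat \<Rightarrow> (nat \<Rightarrow> int) \<Rightarrow> nat \<Rightarrow> int" where
  "reduce_vec k n X = restrict (\<lambda>i. X i mod k) {..<n}"

lemma finite_residue_vecs: "finite (residue_vecs k n)"
  unfolding residue_vecs_def by (intro finite_PiE) auto

lemma reduce_vec_in_residue_vecs: "0 < k \<Longrightarrow> reduce_vec k n X \<in> residue_vecs k n"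
  by (simp add: residue_vecs_def reduce_vec_def restrict_PiE_iff)

lemma reduce_vec_eq_iff: "reduce_vec k n X = reduce_vec k n Y \<longleftrightarrow> (\<forall>i<n. [X i = Y i] (mod k))"
proof
  assume "reduce_vec k n X = reduce_vec k n Y"
  then show "\<forall>i<n. [X i = Y i] (mod k)"
    unfolding reduce_vec_def cong_def by (metis lessThan_iff restrict_apply')
qed (auto simp: reduce_vec_def cong_def intro: restrict_ext)

lemma reduce_vec_residue: "X \<in> residue_vecs k n \<Longrightarrow> reduce_vec k n X = X"
proof -
  assume X: "X \<in> residue_vecs k n"
  then have "reduce_vec k n X = restrict X {..<n}"
    unfolding reduce_vec_def using PiE_mem[OF X[unfolded residue_vecs_def]] by (intro restrict_ext) simp
  then show ?thesis
    using X by (simp add: residue_vecs_def)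
qed

context
  fixes L :: "(nat \<Rightarrow> int) \<Rightarrow> nat \<Rightarrow> int" and k :: int and n :: nat
  assumes k_pos: "0 < k"
    and L_cong: "\<And>X Y j. (\<And>i. i < n \<Longrightarrow> [X i = Y i] (mod k)) \<Longrightarrow> [L X j = L Y j] (mod k)"
    and L_diff: "\<And>X Y j. L (\<lambda>i. X i - Y i) j = L X j - L Y j"
begin

definition reduced_map :: "(nat \<Rightarrow> int) \<Rightarrow> nat \<Rightarrow> int" where
  "reduced_map X = reduce_vec k n (L X)"

lemma reduced_map_reduce_vec: "reduced_map (reduce_vec k n X) = reduced_map X"
  unfolding reduced_map_def reduce_vec_eq_iff
  by (intro allI impI L_cong) (simp add: reduce_vec_def cong_def)

lemma reduced_map_into: "reduced_map ` residue_vecs k n \<subseteq> residue_vecs k n"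
  using reduce_vec_in_residue_vecs[OF k_pos] by (auto simp: reduced_map_def)

lemma onto_mod_iff_reduced_map_onto:
  "(\<forall>g. \<exists>X. \<forall>j<n. [L X j = g j] (mod k)) \<longleftrightarrow> reduced_map ` residue_vecs k n = residue_vecs k n"
proof
  assume onto: "\<forall>g. \<exists>X. \<forall>j<n. [L X j = g j] (mod k)"
  have "G \<in> reduced_map ` residue_vecs k n" if G: "G \<in> residue_vecs k n" for G
  proof -
    obtain X where "\<forall>j<n. [L X j = G j] (mod k)"
      using onto by blast
    then have "reduced_map X = G"
      unfolding reduced_map_def reduce_vec_eq_iff[symmetric] using reduce_vec_residue[OF G] by simp
    then have "reduced_map (reduce_vec k n X) = G"
      by (simp add: reduced_map_reduce_vec)
    then show ?thesis
      using reduce_vec_in_residue_vecs[OF k_pos] by blast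
  qed
  with reduced_map_into show "reduced_map ` residue_vecs k n = residue_vecs k n"
    by blast
next
  assume onto: "reduced_map ` residue_vecs k n = residue_vecs k n"
  show "\<forall>g. \<exists>X. \<forall>j<n. [L X j = g j] (mod k)"
  proof
    fix g
    have "reduce_vec k n g \<in> reduced_map ` residue_vecs k n"
      using reduce_vec_in_residue_vecs[OF k_pos] onto by simp
    then obtain X where "reduced_map X = reduce_vec k n g"
      by (auto elim: imageE)
    then show "\<exists>X. \<forall>j<n. [L X j = g j] (mod k)"
      unfolding reduced_map_def reduce_vec_eq_iff by blast
  qed
qed

lemma kernel_trivial_iff_reduced_map_inj:
  "(\<forall>X. (\<forall>j<n. [L X j = 0] (mod k)) \<longrightarrow> (\<forall>i<n. [X i = 0] (mod k))) \<longleftrightarrow>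
    inj_on reduced_map (residue_vecs k n)"
proof
  assume ker: "\<forall>X. (\<forall>j<n. [L X j = 0] (mod k)) \<longrightarrow> (\<forall>i<n. [X i = 0] (mod k))"
  show "inj_on reduced_map (residue_vecs k n)"
  proof (rule inj_onI)
    fix X Y assume X: "X \<in> residue_vecs k n" and Y: "Y \<in> residue_vecs k n"
      and "reduced_map X = reduced_map Y"
    then have "\<forall>j<n. [L (\<lambda>i. X i - Y i) j = 0] (mod k)"
      unfolding reduced_map_def reduce_vec_eq_iff L_diff by (simp add: cong_iff_dvd_diff)
    then have "\<forall>i<n. [X i - Y i = 0] (mod k)"
      using ker[THEN spec, of "\<lambda>i. X i - Y i"] by blast
    then have "reduce_vec k n X = reduce_vec k n Y"
      unfolding reduce_vec_eq_iff by (simp add: cong_iff_dvd_diff)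
    then show "X = Y"
      using reduce_vec_residue[OF X] reduce_vec_residue[OF Y] by simp
  qed
next
  assume inj: "inj_on reduced_map (residue_vecs k n)"
  show "\<forall>X. (\<forall>j<n. [L X j = 0] (mod k)) \<longrightarrow> (\<forall>i<n. [X i = 0] (mod k))"
  proof (intro allI impI)
    fix X i assume "\<forall>j<n. [L X j = 0] (mod k)" and "i < n"
    moreover have "L (\<lambda>_. 0) j = 0" for j
      using L_diff[of "\<lambda>_. 0" "\<lambda>_. 0" j] by simp
    ultimately have "reduced_map (reduce_vec k n X) = reduced_map (reduce_vec k n (\<lambda>_. 0))"
      unfolding reduced_map_reduce_vec by (simp add: reduced_map_def reduce_vec_eq_iff)
    then have "reduce_vec k n X = reduce_vec k n (\<lambda>_. 0)"
      by (rule inj_onD[OF inj _ reduce_vec_in_residue_vecs[OF k_pos] reduce_vec_in_residue_vecs[OF k_pos]])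
    then show "[X i = 0] (mod k)"
      using \<open>i < n\<close> by (simp add: reduce_vec_eq_iff)
  qed
qed

lemma linear_mod_onto_iff_kernel_trivial:
  "(\<forall>g. \<exists>X. \<forall>j<n. [L X j = g j] (mod k)) \<longleftrightarrow>
    (\<forall>X. (\<forall>j<n. [L X j = 0] (mod k)) \<longrightarrow> (\<forall>i<n. [X i = 0] (mod k)))"
  unfolding onto_mod_iff_reduced_map_onto kernel_trivial_iff_reduced_map_inj
  using endo_inj_surj[OF finite_residue_vecs reduced_map_into]
    finite_surj_inj[OF finite_residue_vecs] by auto

end

section \<open>Minimal feedback arc sets\<close>

lemma tournament_arc_iff:
  "tournament V A \<Longrightarrow> v \<in> V \<Longrightarrow> w \<in> V \<Longrightarrow> v \<noteq> w \<Longrightarrow> (v, w) \<in> A \<longleftrightarrow> (w, v) \<notin> A"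
  unfolding tournament_def by blast

lemma tournament_arcs_subset: "tournament V A \<Longrightarrow> A \<subseteq> V \<times> V"
  unfolding tournament_def by blast

lemma tournament_finite_arcs: "tournament V A \<Longrightarrow> finite A"
  unfolding tournament_def by (meson finite_SigmaI finite_subset)

lemma nth_pair_in_fas_iff:
  assumes "distinct \<sigma>" and "i < length \<sigma>" and "j < length \<sigma>"
  shows "(\<sigma>!i, \<sigma>!j) \<in> fas A \<sigma> \<longleftrightarrow> (\<sigma>!i, \<sigma>!j) \<in> A \<and> j < i"
  using assms by (auto simp: fas_def nth_eq_iff_index_eq)

lemma fas_swap_subset:
  assumes "distinct \<sigma>" and "i + 1 < length \<sigma>" and "(\<sigma>!i, \<sigma>!(i+1)) \<notin> A"
  shows "fas A (\<sigma>[i := \<sigma>!(i+1), i+1 := \<sigma>!i]) \<subseteq> fas A \<sigma> - {(\<sigma>!(i+1), \<sigma>!i)}"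
proof
  define t where "t l = (if l = i then i + 1 else if l = i + 1 then i else l)" for l
  define \<tau> where "\<tau> = \<sigma>[i := \<sigma>!(i+1), i+1 := \<sigma>!i]"
  have \<tau>_nth: "\<tau>!l = \<sigma>!(t l)" if "l < length \<sigma>" for l
    using that assms(2) by (simp add: \<tau>_def t_def nth_list_update)
  fix e assume "e \<in> fas A \<tau>"
  then obtain a b where e: "e \<in> A" "a < b" "b < length \<sigma>" "e = (\<tau>!b, \<tau>!a)"
    unfolding fas_def \<tau>_def by auto
  have "(a, b) \<noteq> (i, i + 1)"
    using e assms(3) \<tau>_nth[of i] \<tau>_nth[of "i + 1"] by (auto simp: t_def)
  then have "t a < t b" and "t b < length \<sigma>" and "(t a, t b) \<noteq> (i, i + 1)"
    using e(2,3) assms(2) unfolding t_def by auto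
  moreover have "e = (\<sigma>!(t b), \<sigma>!(t a))"
    using e(2,3,4) \<tau>_nth by simp
  ultimately show "e \<in> fas A \<sigma> - {(\<sigma>!(i+1), \<sigma>!i)}"
    using e(1) assms(1,2) nth_pair_in_fas_iff[OF assms(1)] by (auto simp: nth_eq_iff_index_eq)
qed

lemma min_fas_consecutive_not_backward:
  assumes "tournament V A" and "min_fas V A \<sigma>" and "i + 1 < length \<sigma>"
  shows "(\<sigma>!(i+1), \<sigma>!i) \<notin> A"
proof
  assume backward_arc: "(\<sigma>!(i+1), \<sigma>!i) \<in> A"
  have \<sigma>: "distinct \<sigma>" "set \<sigma> = V"
    using assms(2) by (auto simp: min_fas_def is_ordering_def)
  define \<tau> where "\<tau> = \<sigma>[i := \<sigma>!(i+1), i+1 := \<sigma>!i]"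
  have "is_ordering V \<tau>"
    using \<sigma> assms(3) by (simp add: \<tau>_def is_ordering_def)
  then have min: "card (fas A \<sigma>) \<le> card (fas A \<tau>)"
    using assms(2) by (simp add: min_fas_def)
  have "\<sigma>!i \<in> V" and "\<sigma>!(i+1) \<in> V" and "\<sigma>!i \<noteq> \<sigma>!(i+1)"
    using \<sigma> assms(3) by (auto simp: nth_eq_iff_index_eq)
  then have "(\<sigma>!i, \<sigma>!(i+1)) \<notin> A"
    using tournament_arc_iff[OF assms(1)] backward_arc by blast
  then have "fas A \<tau> \<subseteq> fas A \<sigma> - {(\<sigma>!(i+1), \<sigma>!i)}"
    unfolding \<tau>_def by (rule fas_swap_subset[OF \<sigma>(1) assms(3)])
  moreover have "(\<sigma>!(i+1), \<sigma>!i) \<in> fas A \<sigma>"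
    using backward_arc assms(3) by (auto simp: fas_def)
  moreover have "finite (fas A \<sigma>)"
    using tournament_finite_arcs[OF assms(1)] by (rule finite_subset[rotated]) (auto simp: fas_def)
  ultimately have "card (fas A \<tau>) < card (fas A \<sigma>)"
    by (intro psubset_card_mono) blast+
  with min show False
    by simp
qed

section \<open>Maximal runs\<close>

definition run_starts :: "('a \<Rightarrow> bool) \<Rightarrow> 'a list \<Rightarrow> nat set" where
  "run_starts P \<sigma> = {i. i < length \<sigma> \<and> P (\<sigma>!i) \<and> (i = 0 \<or> \<not> P (\<sigma>!(i - 1)))}"

definition maximal_runs :: "('a \<Rightarrow> bool) \<Rightarrow> 'a list \<Rightarrow> (nat \<times> nat) set" where
  "maximal_runs P \<sigma> = {(i, j). i \<le> j \<and> j < length \<sigma> \<and> (\<forall>l\<in>{i..j}. P (\<sigma>!l)) \<and>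
     (i = 0 \<or> \<not> P (\<sigma>!(i - 1))) \<and> (j + 1 = length \<sigma> \<or> \<not> P (\<sigma>!(j + 1)))}"

lemma intervals_eq_image_maximal_runs:
  "intervals P \<sigma> = (\<lambda>(i, j). (!) \<sigma> ` {i..j}) ` maximal_runs P \<sigma>"
  by (auto simp: intervals_def maximal_runs_def image_iff)

lemma inj_on_maximal_runs:
  assumes "distinct \<sigma>"
  shows "inj_on (\<lambda>(i, j). (!) \<sigma> ` {i..j}) (maximal_runs P \<sigma>)"
proof (rule inj_onI, clarify)
  fix i j i' j' assume ij: "(i, j) \<in> maximal_runs P \<sigma>" and ij': "(i', j') \<in> maximal_runs P \<sigma>"
    and "(!) \<sigma> ` {i..j} = (!) \<sigma> ` {i'..j'}"
  moreover have "inj_on ((!) \<sigma>) ({i..j} \<union> {i'..j'})"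
    using ij ij' assms by (intro inj_on_nth) (auto simp: maximal_runs_def)
  ultimately have "{i..j} = {i'..j'}"
    by (simp add: inj_on_image_eq_iff)
  then show "i = i' \<and> j = j'"
    using ij ij' by (simp add: maximal_runs_def)
qed

lemma maximal_runs_end_unique:
  assumes "(i, j) \<in> maximal_runs P \<sigma>" and "(i, j') \<in> maximal_runs P \<sigma>"
  shows "j = j'"
proof -
  have "j \<le> j'" if "(i, j) \<in> maximal_runs P \<sigma>" "(i, j') \<in> maximal_runs P \<sigma>" for j j'
  proof (rule ccontr)
    assume "\<not> j \<le> j'"
    then have "j' + 1 \<in> {i..j}" "j' + 1 < length \<sigma>"
      using that by (auto simp: maximal_runs_def)
    then show False
      using that by (auto simp: maximal_runs_def)
  qed
  then show ?thesis
    using assms antisym by blast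
qed

lemma fst_maximal_runs: "fst ` maximal_runs P \<sigma> = run_starts P \<sigma>"
proof
  show "fst ` maximal_runs P \<sigma> \<subseteq> run_starts P \<sigma>"
    by (auto simp: maximal_runs_def run_starts_def)
  show "run_starts P \<sigma> \<subseteq> fst ` maximal_runs P \<sigma>"
  proof
    fix i assume i: "i \<in> run_starts P \<sigma>"
    define R where "R = {j. i \<le> j \<and> j < length \<sigma> \<and> (\<forall>l\<in>{i..j}. P (\<sigma>!l))}"
    define j where "j = Max R"
    have "finite R"
      by (rule finite_subset[of _ "{..<length \<sigma>}"]) (auto simp: R_def)
    moreover have "i \<in> R"
      using i by (simp add: R_def run_starts_def)
    ultimately have "j \<in> R"
      unfolding j_def using Max_in by blast
    moreover have "j + 1 = length \<sigma> \<or> \<not> P (\<sigma>!(j + 1))"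
    proof (rule ccontr)
      assume "\<not> (j + 1 = length \<sigma> \<or> \<not> P (\<sigma>!(j + 1)))"
      then have "j + 1 \<in> R"
        using \<open>j \<in> R\<close> by (auto simp: R_def le_Suc_eq)
      then show False
        using Max_ge[OF \<open>finite R\<close>] by (fastforce simp: j_def)
    qed
    ultimately have "(i, j) \<in> maximal_runs P \<sigma>"
      using i by (simp add: R_def maximal_runs_def run_starts_def)
    then show "i \<in> fst ` maximal_runs P \<sigma>"
      by force
  qed
qed

lemma card_intervals:
  assumes "distinct \<sigma>"
  shows "card (intervals P \<sigma>) = card (run_starts P \<sigma>)"
proof -
  have "inj_on fst (maximal_runs P \<sigma>)"
    by (rule inj_onI) (metis maximal_runs_end_unique prod.collapse)
  then show ?thesis
    by (simp add: intervals_eq_image_maximal_runs card_image inj_on_maximal_runs[OF assms]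
        flip: fst_maximal_runs)
qed

lemma finite_intervals: "finite (intervals P \<sigma>)"
  by (rule finite_subset[of _ "Pow (set \<sigma>)"]) (auto simp: intervals_def)

lemma intervals_memD: "I \<in> intervals P \<sigma> \<Longrightarrow> I \<noteq> {} \<and> I \<subseteq> {x \<in> set \<sigma>. P x}"
  by (auto simp: intervals_def)

lemma intervals_False: "intervals (\<lambda>_. False) \<sigma> = {}"
  by (auto simp: intervals_def)

definition no_adjacent :: "('a \<Rightarrow> bool) \<Rightarrow> ('a \<Rightarrow> bool) \<Rightarrow> 'a list \<Rightarrow> bool" where
  "no_adjacent P Q \<sigma> \<longleftrightarrow> (\<forall>l. l + 1 < length \<sigma> \<longrightarrow> \<not> (P (\<sigma>!l) \<and> Q (\<sigma>!(l + 1))))"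

lemma run_propagates:
  assumes "no_adjacent P Q \<sigma>" and "\<forall>l\<in>{i..j}. P (\<sigma>!l) \<or> Q (\<sigma>!l)"
    and "j < length \<sigma>" and "P (\<sigma>!i)"
  shows "\<forall>l\<in>{i..j}. P (\<sigma>!l)"
proof
  fix l assume "l \<in> {i..j}"
  then have "i \<le> l" "l \<le> j" by auto
  then show "P (\<sigma>!l)"
  proof (induction l rule: dec_induct)
    case (step l)
    then show ?case
      using assms by (auto simp: no_adjacent_def)
  qed (use assms(4) in simp)
qed

lemma intervals_subset_intervals_disj:
  assumes "no_adjacent P Q \<sigma>" and "no_adjacent Q P \<sigma>"
  shows "intervals P \<sigma> \<subseteq> intervals (\<lambda>x. P x \<or> Q x) \<sigma>"
proof
  fix I assume "I \<in> intervals P \<sigma>"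
  then obtain i j where ij: "I = (\<lambda>l. \<sigma>!l) ` {i..j}" "i \<le> j" "j < length \<sigma>"
    "\<forall>l\<in>{i..j}. P (\<sigma>!l)" "i = 0 \<or> \<not> P (\<sigma>!(i - 1))" "j + 1 = length \<sigma> \<or> \<not> P (\<sigma>!(j + 1))"
    by (auto simp: intervals_def)
  moreover have "i = 0 \<or> \<not> Q (\<sigma>!(i - 1))"
  proof (cases "i = 0")
    case False
    then have "\<not> (Q (\<sigma>!(i - 1)) \<and> P (\<sigma>!(i - 1 + 1)))"
      using assms(2)[unfolded no_adjacent_def, rule_format, of "i - 1"] ij(2,3) False by simp
    then show ?thesis
      using ij(2,4) False by simp
  qed simp
  moreover have "j + 1 = length \<sigma> \<or> \<not> Q (\<sigma>!(j + 1))"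
    using assms(1) ij(2,3,4) unfolding no_adjacent_def by auto
  ultimately show "I \<in> intervals (\<lambda>x. P x \<or> Q x) \<sigma>"
    unfolding intervals_def by blast
qed

lemma intervals_disj:
  assumes "no_adjacent P Q \<sigma>" and "no_adjacent Q P \<sigma>"
  shows "intervals (\<lambda>x. P x \<or> Q x) \<sigma> = intervals P \<sigma> \<union> intervals Q \<sigma>"
proof
  show "intervals (\<lambda>x. P x \<or> Q x) \<sigma> \<subseteq> intervals P \<sigma> \<union> intervals Q \<sigma>"
  proof
    fix I assume "I \<in> intervals (\<lambda>x. P x \<or> Q x) \<sigma>"
    then obtain i j where ij: "I = (\<lambda>l. \<sigma>!l) ` {i..j}" "i \<le> j" "j < length \<sigma>"
      "\<forall>l\<in>{i..j}. P (\<sigma>!l) \<or> Q (\<sigma>!l)" "i = 0 \<or> \<not> (P (\<sigma>!(i - 1)) \<or> Q (\<sigma>!(i - 1)))"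
      "j + 1 = length \<sigma> \<or> \<not> (P (\<sigma>!(j + 1)) \<or> Q (\<sigma>!(j + 1)))"
      by (auto simp: intervals_def)
    then have "(\<forall>l\<in>{i..j}. P (\<sigma>!l)) \<or> (\<forall>l\<in>{i..j}. Q (\<sigma>!l))"
      using run_propagates[OF assms(1)] run_propagates[OF assms(2)] by (metis le_refl atLeastAtMost_iff)
    with ij show "I \<in> intervals P \<sigma> \<union> intervals Q \<sigma>"
      unfolding intervals_def by blast
  qed
  show "intervals P \<sigma> \<union> intervals Q \<sigma> \<subseteq> intervals (\<lambda>x. P x \<or> Q x) \<sigma>"
    using intervals_subset_intervals_disj[OF assms] intervals_subset_intervals_disj[OF assms(2,1)]
    by (simp add: disj_commute)
qed

lemma intervals_eq_singleton:
  assumes "distinct \<sigma>" and "p < length \<sigma>"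
  shows "intervals (\<lambda>x. x = \<sigma>!p) \<sigma> = {{\<sigma>!p}}"
proof -
  have at_p: "\<sigma>!l = \<sigma>!p \<longleftrightarrow> l = p" if "l < length \<sigma>" for l
    using assms that by (simp add: nth_eq_iff_index_eq)
  show ?thesis
    unfolding intervals_def
  proof (intro equalityI subsetI)
    fix I assume "I \<in> {(\<lambda>l. \<sigma>!l) ` {i..j} | i j. i \<le> j \<and> j < length \<sigma> \<and>
      (\<forall>l\<in>{i..j}. \<sigma>!l = \<sigma>!p) \<and> (i = 0 \<or> \<sigma>!(i - 1) \<noteq> \<sigma>!p) \<and>
      (j + 1 = length \<sigma> \<or> \<sigma>!(j + 1) \<noteq> \<sigma>!p)}"
    then obtain i j where ij: "I = (\<lambda>l. \<sigma>!l) ` {i..j}" "i \<le> j" "j < length \<sigma>"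
      "\<forall>l\<in>{i..j}. \<sigma>!l = \<sigma>!p"
      by blast
    then have "i = p" "j = p"
      using at_p by auto
    then show "I \<in> {{\<sigma>!p}}"
      using ij(1) by simp
  next
    fix I assume "I \<in> {{\<sigma>!p}}"
    then have "I = (\<lambda>l. \<sigma>!l) ` {p..p}"
      by simp
    moreover have "p = 0 \<or> \<sigma>!(p - 1) \<noteq> \<sigma>!p" and "p + 1 = length \<sigma> \<or> \<sigma>!(p + 1) \<noteq> \<sigma>!p"
      using at_p assms(2) by auto
    ultimately show "I \<in> {(\<lambda>l. \<sigma>!l) ` {i..j} | i j. i \<le> j \<and> j < length \<sigma> \<and>
      (\<forall>l\<in>{i..j}. \<sigma>!l = \<sigma>!p) \<and> (i = 0 \<or> \<sigma>!(i - 1) \<noteq> \<sigma>!p) \<and>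
      (j + 1 = length \<sigma> \<or> \<sigma>!(j + 1) \<noteq> \<sigma>!p)}"
      using assms(2) by (intro CollectI exI[of _ p]) simp
  qed
qed

lemma sum_lessThan_of_bool_mult:
  fixes X :: "nat \<Rightarrow> 'a::semiring_1"
  assumes "S \<subseteq> {..<n}"
  shows "(\<Sum>i<n. of_bool (i \<in> S) * X i) = sum X S"
proof -
  have "(\<Sum>i<n. of_bool (i \<in> S) * X i) = sum X ({..<n} \<inter> {i. i \<in> S})"
    by (rule sum_of_bool_mult_eq) simp
  also have "{..<n} \<inter> {i. i \<in> S} = S"
    using assms by blast
  finally show ?thesis .
qed

section \<open>Orderings whose feedback arcs form a star\<close>

text \<open>The last two
  assumptions are what minimality of the feedback arc set contributes.\<close>

locale star_ordering =
  fixes A :: "('a \<times> 'a) set" and \<sigma> :: "'a list" and p :: nat and U W :: "'a set"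
  assumes distinct: "distinct \<sigma>"
    and center: "p < length \<sigma>"
    and tournament_nth: "\<And>i j. i < length \<sigma> \<Longrightarrow> j < length \<sigma> \<Longrightarrow> i \<noteq> j \<Longrightarrow>
      (\<sigma>!i, \<sigma>!j) \<in> A \<longleftrightarrow> (\<sigma>!j, \<sigma>!i) \<notin> A"
    and backward_arc_iff: "\<And>i j. i < length \<sigma> \<Longrightarrow> j < length \<sigma> \<Longrightarrow>
      (\<sigma>!i, \<sigma>!j) \<in> A \<and> j < i \<longleftrightarrow> \<sigma>!i \<in> U \<and> j = p \<or> i = p \<and> \<sigma>!j \<in> W"
    and after_center: "p + 1 < length \<sigma> \<Longrightarrow> \<sigma>!(p + 1) \<notin> U"
    and before_center: "0 < p \<Longrightarrow> \<sigma>!(p - 1) \<notin> W"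
begin

definition posU :: "nat set" where
  "posU = {i. i < length \<sigma> \<and> \<sigma>!i \<in> U}"

definition posW :: "nat set" where
  "posW = {i. i < length \<sigma> \<and> \<sigma>!i \<in> W}"

lemma posU_after_center: "i \<in> posU \<Longrightarrow> p < i"
  using backward_arc_iff[of i p] center by (auto simp: posU_def)

lemma posW_before_center: "i \<in> posW \<Longrightarrow> i < p"
  using backward_arc_iff[of p i] center by (auto simp: posW_def)

lemma finite_posU: "finite posU" and finite_posW: "finite posW"
  by (auto simp: posU_def posW_def)

lemma closed_nbhd_indicator:
  assumes "i < length \<sigma>" and "j < length \<sigma>"
  shows "(of_bool (\<sigma>!i = \<sigma>!j \<or> (\<sigma>!i, \<sigma>!j) \<in> A) :: int) =
    of_bool (i \<le> j) + of_bool (j = p \<and> i \<in> posU) - of_bool (j = p \<and> i \<in> posW)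
    + of_bool (i = p \<and> j \<in> posW) - of_bool (i = p \<and> j \<in> posU)"
proof -
  have ne: "\<sigma>!i = \<sigma>!j \<longleftrightarrow> i = j"
    using assms distinct by (simp add: nth_eq_iff_index_eq)
  consider "i < j" | "i = j" | "j < i"
    by linarith
  then show ?thesis
  proof cases
    case 1
    have "(\<sigma>!j, \<sigma>!i) \<in> A \<longleftrightarrow> i = p \<and> j \<in> posU \<or> j = p \<and> i \<in> posW"
      using backward_arc_iff[OF assms(2,1)] 1 assms by (auto simp: posU_def posW_def)
    moreover have "\<not> (j = p \<and> i \<in> posU)" and "\<not> (i = p \<and> j \<in> posW)"
      using 1 by (auto dest: posU_after_center posW_before_center)
    ultimately show ?thesis
      using tournament_nth[OF assms] ne 1
      by (cases "i = p \<and> j \<in> posU"; cases "j = p \<and> i \<in> posW") auto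
  next
    case 2
    then show ?thesis
      by (auto dest: posU_after_center posW_before_center)
  next
    case 3
    have "(\<sigma>!i, \<sigma>!j) \<in> A \<longleftrightarrow> j = p \<and> i \<in> posU \<or> i = p \<and> j \<in> posW"
      using backward_arc_iff[OF assms] 3 assms by (auto simp: posU_def posW_def)
    moreover have "\<not> (j = p \<and> i \<in> posW)" and "\<not> (i = p \<and> j \<in> posU)"
      using 3 by (auto dest: posU_after_center posW_before_center)
    ultimately show ?thesis
      using ne 3 by (cases "j = p \<and> i \<in> posU"; cases "i = p \<and> j \<in> posW") auto
  qed
qed

lemma nbhd_sum_eq:
  assumes "j < length \<sigma>"
  shows "nbhd_sum A \<sigma> X j = (\<Sum>i\<le>j. X i) + of_bool (j = p) * (sum X posU - sum X posW)
    + of_bool (j \<in> posW) * X p - of_bool (j \<in> posU) * X p"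
proof -
  have "nbhd_sum A \<sigma> X j = (\<Sum>i<length \<sigma>. (of_bool (i \<le> j) + of_bool (j = p \<and> i \<in> posU)
      - of_bool (j = p \<and> i \<in> posW) + of_bool (i = p \<and> j \<in> posW) - of_bool (i = p \<and> j \<in> posU)) * X i)"
    unfolding nbhd_sum_def
  proof (rule sum.cong[OF refl])
    fix i assume "i \<in> {..<length \<sigma>}"
    then show "of_bool (\<sigma>!i = \<sigma>!j \<or> (\<sigma>!i, \<sigma>!j) \<in> A) * X i =
      (of_bool (i \<le> j) + of_bool (j = p \<and> i \<in> posU) - of_bool (j = p \<and> i \<in> posW)
        + of_bool (i = p \<and> j \<in> posW) - of_bool (i = p \<and> j \<in> posU)) * X i"
      using assms by (simp only: lessThan_iff closed_nbhd_indicator)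
  qed
  also have "\<dots> = (\<Sum>i<length \<sigma>. of_bool (i \<in> {..j}) * X i)
      + of_bool (j = p) * ((\<Sum>i<length \<sigma>. of_bool (i \<in> posU) * X i) - (\<Sum>i<length \<sigma>. of_bool (i \<in> posW) * X i))
      + of_bool (j \<in> posW) * (\<Sum>i<length \<sigma>. of_bool (i \<in> {p}) * X i)
      - of_bool (j \<in> posU) * (\<Sum>i<length \<sigma>. of_bool (i \<in> {p}) * X i)"
    by (simp add: algebra_simps sum.distrib sum_subtractf sum_distrib_left of_bool_conj)
  also have "\<dots> = (\<Sum>i\<le>j. X i) + of_bool (j = p) * (sum X posU - sum X posW)
      + of_bool (j \<in> posW) * X p - of_bool (j \<in> posU) * X p"
  proof -
    have "{..j} \<subseteq> {..<length \<sigma>}" "posU \<subseteq> {..<length \<sigma>}" "posW \<subseteq> {..<length \<sigma>}"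
      "{p} \<subseteq> {..<length \<sigma>}"
      using assms center by (auto simp: posU_def posW_def)
    then show ?thesis
      by (simp only: sum_lessThan_of_bool_mult) simp
  qed
  finally show ?thesis .
qed

text \<open>\<open>level\<close> is the profile forced on the prefix sums of a kernel element (up to the factor
  \<open>X p\<close>), and \<open>kernel_vec\<close> is its difference sequence.\<close>

definition level :: "nat \<Rightarrow> int" where
  "level i = of_bool (i \<in> posU \<or> i = p) - of_bool (i \<in> posW)"

definition kernel_vec :: "nat \<Rightarrow> int" where
  "kernel_vec i = level i - (if i = 0 then 0 else level (i - 1))"

lemma sum_kernel_vec: "(\<Sum>i\<le>j. kernel_vec i) = level j"
  by (induction j) (simp_all add: kernel_vec_def)

lemma level_center: "level p = 1"
  by (auto simp: level_def dest: posW_before_center)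

lemma level_before_center: "0 < p \<Longrightarrow> level (p - 1) = 0"
  using before_center center by (auto simp: level_def posW_def dest: posU_after_center)

lemma level_off_center: "i \<noteq> p \<Longrightarrow> level i = of_bool (i \<in> posU) - of_bool (i \<in> posW)"
  by (simp add: level_def)

lemma kernel_vec_center: "kernel_vec p = 1"
  using level_center level_before_center by (simp add: kernel_vec_def)

lemma nbhd_sum_kernel_vec_off_center:
  assumes "j < length \<sigma>" and "j \<noteq> p"
  shows "nbhd_sum A \<sigma> kernel_vec j = 0"
  using assms by (simp add: nbhd_sum_eq sum_kernel_vec level_off_center kernel_vec_center)

lemma sum_kernel_vec_posU: "sum kernel_vec posU = int (card (run_starts (\<lambda>x. x \<in> U) \<sigma>))"
proof -
  have "kernel_vec i = of_bool (i \<in> run_starts (\<lambda>x. x \<in> U) \<sigma>)" if i: "i \<in> posU" for i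
  proof -
    have "p < i"
      using posU_after_center i .
    moreover have "i - 1 \<noteq> p"
      using after_center i \<open>p < i\<close> by (auto simp: posU_def)
    moreover have "i - 1 \<notin> posW"
      using \<open>p < i\<close> by (auto dest: posW_before_center)
    ultimately have "level (i - 1) = of_bool (i - 1 \<in> posU)" and "level i = 1"
      using i by (auto simp: level_off_center level_def dest: posW_before_center)
    then show ?thesis
      using i \<open>p < i\<close> by (auto simp: kernel_vec_def run_starts_def posU_def)
  qed
  then have "sum kernel_vec posU = (\<Sum>i\<in>posU. of_bool (i \<in> run_starts (\<lambda>x. x \<in> U) \<sigma>))"
    by (rule sum.cong[OF refl])
  also have "\<dots> = int (card (posU \<inter> run_starts (\<lambda>x. x \<in> U) \<sigma>))"
    using finite_posU by simp
  also have "posU \<inter> run_starts (\<lambda>x. x \<in> U) \<sigma> = run_starts (\<lambda>x. x \<in> U) \<sigma>"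
    by (auto simp: posU_def run_starts_def)
  finally show ?thesis .
qed

lemma sum_kernel_vec_posW: "sum kernel_vec posW = - int (card (run_starts (\<lambda>x. x \<in> W) \<sigma>))"
proof -
  have "kernel_vec i = - of_bool (i \<in> run_starts (\<lambda>x. x \<in> W) \<sigma>)" if i: "i \<in> posW" for i
  proof -
    have "i < p"
      using posW_before_center i .
    then have "i - 1 \<noteq> p" and "i - 1 \<notin> posU" and "i \<notin> posU"
      by (auto dest: posU_after_center)
    then have "level (i - 1) = - of_bool (i - 1 \<in> posW)" and "level i = -1"
      using i \<open>i < p\<close> by (simp_all add: level_off_center)
    then show ?thesis
      using i \<open>i < p\<close> by (auto simp: kernel_vec_def run_starts_def posW_def)
  qed
  then have "sum kernel_vec posW = - (\<Sum>i\<in>posW. of_bool (i \<in> run_starts (\<lambda>x. x \<in> W) \<sigma>))"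
    by (simp add: sum_negf)
  also have "(\<Sum>i\<in>posW. of_bool (i \<in> run_starts (\<lambda>x. x \<in> W) \<sigma>)) =
      int (card (posW \<inter> run_starts (\<lambda>x. x \<in> W) \<sigma>))"
    using finite_posW by simp
  also have "posW \<inter> run_starts (\<lambda>x. x \<in> W) \<sigma> = run_starts (\<lambda>x. x \<in> W) \<sigma>"
    by (auto simp: posW_def run_starts_def)
  finally show ?thesis .
qed

lemma nbhd_sum_kernel_vec_center:
  "nbhd_sum A \<sigma> kernel_vec p =
    1 + int (card (run_starts (\<lambda>x. x \<in> U) \<sigma>)) + int (card (run_starts (\<lambda>x. x \<in> W) \<sigma>))"
proof -
  have "p \<notin> posU" and "p \<notin> posW"
    by (auto dest: posU_after_center posW_before_center)
  then show ?thesis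
    using center by (simp add: nbhd_sum_eq sum_kernel_vec level_center sum_kernel_vec_posU sum_kernel_vec_posW)
qed

lemma kernel_prefix_sum_cong:
  assumes ker: "\<forall>j<length \<sigma>. [nbhd_sum A \<sigma> X j = 0] (mod k)" and "j < length \<sigma>"
  shows "[(\<Sum>l\<le>j. X l) = X p * level j] (mod k)"
proof -
  have off_center: "[(\<Sum>l\<le>j. X l) = X p * level j] (mod k)" if "j < length \<sigma>" "j \<noteq> p" for j
  proof -
    have "nbhd_sum A \<sigma> X j = (\<Sum>l\<le>j. X l) - X p * level j"
      using that by (simp add: nbhd_sum_eq level_off_center algebra_simps)
    moreover have "[nbhd_sum A \<sigma> X j = 0] (mod k)"
      using ker that(1) by blast
    ultimately show ?thesis
      by (simp add: cong_iff_dvd_diff cong_0_iff)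
  qed
  show ?thesis
  proof (cases "j = p \<and> 0 < p")
    case True
    then have "(\<Sum>l\<le>p. X l) = (\<Sum>l\<le>p - 1. X l) + X p"
      by (metis Suc_pred' sum.atMost_Suc)
    moreover have "[(\<Sum>l\<le>p - 1. X l) = 0] (mod k)"
      using off_center[of "p - 1"] center True level_before_center by auto
    ultimately show ?thesis
      using True level_center by (simp add: cong_iff_dvd_diff cong_0_iff)
  next
    case False
    then show ?thesis
      using off_center[OF assms(2)] level_center by (cases "j = p") auto
  qed
qed

lemma kernel_elem_eq_multiple:
  assumes ker: "\<forall>j<length \<sigma>. [nbhd_sum A \<sigma> X j = 0] (mod k)" and "i < length \<sigma>"
  shows "[X i = X p * kernel_vec i] (mod k)"
proof (cases "i = 0")
  case True
  then show ?thesis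
    using kernel_prefix_sum_cong[OF assms] by (simp add: kernel_vec_def)
next
  case False
  then have "X i = (\<Sum>l\<le>i. X l) - (\<Sum>l\<le>i - 1. X l)"
    by (metis Suc_pred' add_diff_cancel_left' bot_nat_0.not_eq_extremum sum.atMost_Suc)
  moreover have "X p * kernel_vec i = X p * level i - X p * level (i - 1)"
    using False by (simp add: kernel_vec_def right_diff_distrib)
  ultimately show ?thesis
    using kernel_prefix_sum_cong[OF ker] assms(2) by (simp add: cong_diff)
qed

lemma nontrivial_kernel_if_not_coprime:
  fixes k :: int
  assumes "0 < k" and "\<not> coprime k (nbhd_sum A \<sigma> kernel_vec p)"
  obtains y where "0 < y" and "y < k"
    and "\<forall>j<length \<sigma>. [nbhd_sum A \<sigma> (\<lambda>l. y * kernel_vec l) j = 0] (mod k)"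
proof -
  define d where "d = gcd k (nbhd_sum A \<sigma> kernel_vec p)"
  define y where "y = k div d"
  have "d dvd k" and "d dvd nbhd_sum A \<sigma> kernel_vec p"
    by (simp_all add: d_def)
  have "0 < d" and "d \<noteq> 1"
    using assms by (simp_all add: d_def coprime_iff_gcd_eq_1)
  have k_eq: "k = y * d"
    using \<open>d dvd k\<close> by (simp add: y_def)
  then have "0 < y"
    using assms(1) \<open>0 < d\<close> by (simp add: zero_less_mult_iff)
  moreover have "y < k"
    using k_eq \<open>0 < y\<close> \<open>0 < d\<close> \<open>d \<noteq> 1\<close> mult_strict_left_mono[of 1 d y] by simp
  moreover have "[nbhd_sum A \<sigma> (\<lambda>l. y * kernel_vec l) j = 0] (mod k)" if "j < length \<sigma>" for j
  proof (cases "j = p")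
    case True
    obtain t where "nbhd_sum A \<sigma> kernel_vec p = d * t"
      using \<open>d dvd nbhd_sum A \<sigma> kernel_vec p\<close> by blast
    then show ?thesis
      using True k_eq by (simp add: nbhd_sum_scale cong_0_iff)
  qed (simp add: nbhd_sum_scale nbhd_sum_kernel_vec_off_center that)
  ultimately show ?thesis
    using that by blast
qed

lemma kernel_trivial_iff_coprime:
  fixes k :: int
  assumes "0 < k"
  shows "(\<forall>X. (\<forall>j<length \<sigma>. [nbhd_sum A \<sigma> X j = 0] (mod k)) \<longrightarrow> (\<forall>i<length \<sigma>. [X i = 0] (mod k)))
    \<longleftrightarrow> coprime k (nbhd_sum A \<sigma> kernel_vec p)"
proof
  assume trivial: "\<forall>X. (\<forall>j<length \<sigma>. [nbhd_sum A \<sigma> X j = 0] (mod k)) \<longrightarrow> (\<forall>i<length \<sigma>. [X i = 0] (mod k))"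
  show "coprime k (nbhd_sum A \<sigma> kernel_vec p)"
  proof (rule ccontr)
    assume "\<not> coprime k (nbhd_sum A \<sigma> kernel_vec p)"
    then obtain y where "0 < y" "y < k"
      and "\<forall>j<length \<sigma>. [nbhd_sum A \<sigma> (\<lambda>l. y * kernel_vec l) j = 0] (mod k)"
      using nontrivial_kernel_if_not_coprime[OF assms] by blast
    then have "[y * kernel_vec p = 0] (mod k)"
      using trivial[THEN spec, of "\<lambda>l. y * kernel_vec l"] center by blast
    with \<open>0 < y\<close> \<open>y < k\<close> show False
      by (simp add: kernel_vec_center cong_0_iff zdvd_not_zless)
  qed
next
  assume coprime: "coprime k (nbhd_sum A \<sigma> kernel_vec p)"
  show "\<forall>X. (\<forall>j<length \<sigma>. [nbhd_sum A \<sigma> X j = 0] (mod k)) \<longrightarrow> (\<forall>i<length \<sigma>. [X i = 0] (mod k))"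
  proof (intro allI impI)
    fix X i assume ker: "\<forall>j<length \<sigma>. [nbhd_sum A \<sigma> X j = 0] (mod k)" and i: "i < length \<sigma>"
    have "[nbhd_sum A \<sigma> X p = nbhd_sum A \<sigma> (\<lambda>l. X p * kernel_vec l) p] (mod k)"
      using kernel_elem_eq_multiple[OF ker] by (rule nbhd_sum_cong)
    then have "[X p * nbhd_sum A \<sigma> kernel_vec p = 0] (mod k)"
      using ker center by (metis cong_sym cong_trans nbhd_sum_scale)
    then have "k dvd X p"
      using coprime by (simp add: cong_0_iff coprime_dvd_mult_left_iff)
    then show "[X i = 0] (mod k)"
      using kernel_elem_eq_multiple[OF ker i] by (metis cong_0_iff cong_trans dvd_mult2)
  qed
qed

lemma nth_eq_center_iff: "l < length \<sigma> \<Longrightarrow> \<sigma>!l = \<sigma>!p \<longleftrightarrow> l = p"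
  using distinct center by (simp add: nth_eq_iff_index_eq)

lemma no_adjacent_W_center: "no_adjacent (\<lambda>x. x \<in> W) (\<lambda>x. b \<and> x = \<sigma>!p) \<sigma>"
  using before_center by (auto simp: no_adjacent_def nth_eq_center_iff)

lemma no_adjacent_center_W: "no_adjacent (\<lambda>x. b \<and> x = \<sigma>!p) (\<lambda>x. x \<in> W) \<sigma>"
  using posW_before_center[of "p + 1"] by (auto simp: no_adjacent_def nth_eq_center_iff posW_def)

lemma no_adjacent_U_center: "no_adjacent (\<lambda>x. x \<in> U) (\<lambda>x. b \<and> x = \<sigma>!p) \<sigma>"
  using posU_after_center[of "p - 1"] by (auto simp: no_adjacent_def nth_eq_center_iff posU_def)

lemma no_adjacent_center_U: "no_adjacent (\<lambda>x. b \<and> x = \<sigma>!p) (\<lambda>x. x \<in> U) \<sigma>"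
  using after_center by (auto simp: no_adjacent_def nth_eq_center_iff)

lemma intervals_center: "intervals (\<lambda>x. b \<and> x = \<sigma>!p) \<sigma> = (if b then {{\<sigma>!p}} else {})"
  by (cases b) (simp_all add: intervals_eq_singleton[OF distinct center] intervals_False)

lemma card_feedback_intervals:
  assumes S: "S = {(u, \<sigma>!p) | u. u \<in> U} \<union> {(\<sigma>!p, w) | w. w \<in> W}" and "U \<union> W \<noteq> {}"
  shows "card (feedback_intervals S \<sigma>) =
    1 + card (run_starts (\<lambda>x. x \<in> U) \<sigma>) + card (run_starts (\<lambda>x. x \<in> W) \<sigma>)"
proof -
  define IU where "IU = intervals (\<lambda>x. x \<in> U) \<sigma>"
  define IW where "IW = intervals (\<lambda>x. x \<in> W) \<sigma>"
  have "head_fv S = (\<lambda>x. x \<in> W \<or> (U \<noteq> {} \<and> x = \<sigma>!p))"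
    using S by (auto simp: head_fv_def fun_eq_iff)
  moreover have "tail_fv S = (\<lambda>x. x \<in> U \<or> (W \<noteq> {} \<and> x = \<sigma>!p))"
    using S by (auto simp: tail_fv_def fun_eq_iff)
  ultimately have "feedback_intervals S \<sigma> = IW \<union> IU \<union> {{\<sigma>!p}}"
    using \<open>U \<union> W \<noteq> {}\<close>
    by (auto simp: feedback_intervals_def IU_def IW_def intervals_center
        intervals_disj no_adjacent_W_center no_adjacent_center_W no_adjacent_U_center no_adjacent_center_U)
  moreover have "IW \<inter> IU = {}"
  proof -
    have "\<not> (\<sigma>!i \<in> U \<and> \<sigma>!i \<in> W)" if "i < length \<sigma>" for i
      using that posU_after_center[of i] posW_before_center[of i] by (auto simp: posU_def posW_def)
    then have "\<not> (x \<in> set \<sigma> \<and> x \<in> U \<and> x \<in> W)" for x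
      by (auto simp: in_set_conv_nth)
    then show ?thesis
      unfolding IU_def IW_def by (blast dest: intervals_memD)
  qed
  moreover have "{\<sigma>!p} \<notin> IW \<union> IU"
  proof -
    have "\<sigma>!p \<notin> U" and "\<sigma>!p \<notin> W"
      using center posU_after_center[of p] posW_before_center[of p] by (auto simp: posU_def posW_def)
    then show ?thesis
      unfolding IU_def IW_def by (blast dest: intervals_memD)
  qed
  ultimately have "card (feedback_intervals S \<sigma>) = card IW + card IU + 1"
    by (simp add: IU_def IW_def finite_intervals card_Un_disjoint)
  then show ?thesis
    by (simp add: IU_def IW_def card_intervals[OF distinct])
qed

end

lemma star_ordering_of_min_fas:
  assumes T: "tournament V A" and M: "min_fas V A \<sigma>" and "p < length \<sigma>"
    and S: "fas A \<sigma> = {(u, \<sigma>!p) | u. u \<in> U} \<union> {(\<sigma>!p, w) | w. w \<in> W}"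
  shows "star_ordering A \<sigma> p U W"
proof
  have \<sigma>: "distinct \<sigma>" "set \<sigma> = V"
    using M by (auto simp: min_fas_def is_ordering_def)
  then show "distinct \<sigma>" by simp
  show "p < length \<sigma>" by fact
  have at_p: "\<sigma>!l = \<sigma>!p \<longleftrightarrow> l = p" if "l < length \<sigma>" for l
    using \<sigma>(1) \<open>p < length \<sigma>\<close> that by (simp add: nth_eq_iff_index_eq)
  show "(\<sigma>!i, \<sigma>!j) \<in> A \<longleftrightarrow> (\<sigma>!j, \<sigma>!i) \<notin> A"
    if "i < length \<sigma>" "j < length \<sigma>" "i \<noteq> j" for i j
    using tournament_arc_iff[OF T, of "\<sigma>!i" "\<sigma>!j"] \<sigma> that nth_mem[of i \<sigma>] nth_mem[of j \<sigma>]
    by (simp add: nth_eq_iff_index_eq)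
  show "(\<sigma>!i, \<sigma>!j) \<in> A \<and> j < i \<longleftrightarrow> \<sigma>!i \<in> U \<and> j = p \<or> i = p \<and> \<sigma>!j \<in> W"
    if "i < length \<sigma>" "j < length \<sigma>" for i j
    using nth_pair_in_fas_iff[OF \<sigma>(1) that, of A] S at_p that by auto
  show "\<sigma>!(p + 1) \<notin> U" if "p + 1 < length \<sigma>"
  proof
    assume "\<sigma>!(p + 1) \<in> U"
    then have "(\<sigma>!(p + 1), \<sigma>!p) \<in> fas A \<sigma>"
      using S by blast
    then have "(\<sigma>!(p + 1), \<sigma>!p) \<in> A"
      by (simp add: fas_def)
    with min_fas_consecutive_not_backward[OF T M that] show False ..
  qed
  show "\<sigma>!(p - 1) \<notin> W" if "0 < p"
  proof
    assume "\<sigma>!(p - 1) \<in> W"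
    then have "(\<sigma>!p, \<sigma>!(p - 1)) \<in> fas A \<sigma>"
      using S by blast
    moreover have "(\<sigma>!(p - 1 + 1), \<sigma>!(p - 1)) \<notin> A"
      using min_fas_consecutive_not_backward[OF T M, of "p - 1"] \<open>p < length \<sigma>\<close> that by simp
    ultimately show False
      using that by (simp add: fas_def)
  qed
qed

lemma min_fas_directed_star:
  assumes "tournament V A" and "min_fas V A \<sigma>" and "is_directed_star (fas A \<sigma>)"
  obtains p U W where "p < length \<sigma>" and "U \<union> W \<noteq> {}"
    and "fas A \<sigma> = {(u, \<sigma>!p) | u. u \<in> U} \<union> {(\<sigma>!p, w) | w. w \<in> W}"
proof -
  obtain c U W where S: "fas A \<sigma> = {(u, c) | u. u \<in> U} \<union> {(c, w) | w. w \<in> W}"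
    and verts: "arc_verts (fas A \<sigma>) = insert c (U \<union> W)"
    using assms(3) unfolding is_directed_star_def by (elim exE conjE) (rule that)
  have "arc_verts (fas A \<sigma>) \<subseteq> set \<sigma>"
    using tournament_arcs_subset[OF assms(1)] assms(2)
    by (auto simp: arc_verts_def fas_def min_fas_def is_ordering_def)
  then obtain p where "p < length \<sigma>" "\<sigma>!p = c"
    using verts by (auto simp: in_set_conv_nth)
  moreover have "U \<union> W \<noteq> {}"
    using verts S by (auto simp: arc_verts_def)
  ultimately show ?thesis
    using that S by blast
qed

theorem mainTheorem8:
  fixes V :: "'a set" and A :: "('a \<times> 'a) set" and \<sigma> :: "'a list" and k :: nat
  assumes "tournament V A"
    and "strongly_connected V A"
    and "min_fas V A \<sigma>"
    and "is_directed_star (fas A \<sigma>)"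
    and "k \<ge> 2"
  shows "k_AW k V A \<longleftrightarrow> gcd k (card (feedback_intervals (fas A \<sigma>) \<sigma>)) = 1"
proof -
  obtain p U W where p: "p < length \<sigma>" and "U \<union> W \<noteq> {}"
    and S: "fas A \<sigma> = {(u, \<sigma>!p) | u. u \<in> U} \<union> {(\<sigma>!p, w) | w. w \<in> W}"
    using min_fas_directed_star[OF assms(1,3,4)] .
  interpret star_ordering A \<sigma> p U W
    by (rule star_ordering_of_min_fas[OF assms(1,3) p S])
  have "k_AW k V A \<longleftrightarrow> (\<forall>g. \<exists>X. \<forall>j<length \<sigma>. [nbhd_sum A \<sigma> X j = g j] (mod int k))"
    using assms(3,5) by (intro k_AW_iff_nbhd_sum_surj) (auto simp: min_fas_def is_ordering_def)
  also have "\<dots> \<longleftrightarrow> (\<forall>X. (\<forall>j<length \<sigma>. [nbhd_sum A \<sigma> X j = 0] (mod int k)) \<longrightarrow>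
      (\<forall>i<length \<sigma>. [X i = 0] (mod int k)))"
    using assms(5) by (intro linear_mod_onto_iff_kernel_trivial nbhd_sum_cong nbhd_sum_diff) auto
  also have "\<dots> \<longleftrightarrow> coprime (int k) (nbhd_sum A \<sigma> kernel_vec p)"
    using assms(5) by (intro kernel_trivial_iff_coprime) auto
  also have "nbhd_sum A \<sigma> kernel_vec p = int (card (feedback_intervals (fas A \<sigma>) \<sigma>))"
    using card_feedback_intervals[OF S \<open>U \<union> W \<noteq> {}\<close>] by (simp add: nbhd_sum_kernel_vec_center)
  finally show ?thesis
    by (simp add: coprime_iff_gcd_eq_1)
qed

end
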